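(* Let $\delta\in(0,1)$ and $\iota=\log(2|\mathcal{G}||\mathcal{T}||\Pi|/\delta)$. On the event $\mathcal{E}$ (defined in the context), for every policy $\pi\in\Pi$, $$\max_{T\in\mathcal{T}}\mathrm{lb}(T,\pi)\ge\eta(T^\star,\pi)-\frac{6V_{\max}\epsilon_\rho(\pi)}{(1-\gamma)^2}-\frac{1}{1-\gamma}\Big(V_{\max}\epsilon_\mu(\pi)+2V_{\max}\sqrt{\zeta\iota/n}+\zeta V_{\max}\mathrm{TV}(\hat\mu,\mu)\Big).$$
   Context: Setting: a discounted MDP with state space $\mathcal{S}$ and action space $\mathcal{A}$ (discrete), unknown true transition $T^\star:\mathcal{S}\times\mathcal{A}\to\Delta(\mathcal{S})$, known reward $r:\mathcal{S}\times\mathcal{A}\to\mathbb{R}_{\ge0}$, discount $\gamma\in[0,1)$. For a transition $T$ and policy $\pi:\mathcal{S}\to\Delta(\mathcal{A})$, $V^\pi_T(s)=\mathbb{E}[\sum_{t\ge0}\gamma^t r(s_t,a_t)\mid s_0=s,a_t\sim\pi(s_t),s_{t+1}\sim T(s_t,a_t)]$; $R_{\max}=\max r$, $V_{\max}=R_{\max}/(1-\gamma)$; fixed initial state $s_0$, $\eta(T,\pi)=V^\pi_T(s_0)$; $\rho^\pi_T(s,a)=(1-\gamma)\sum_{t\ge0}\gamma^t\Pr^\pi_T(s_t=s,a_t=a\mid s_0)$. Data $\mathcal{D}=\{(s_i,a_i,s_i')\}_{i=1}^n$ i.i.d. from $\mu$ on $\mathcal{S}\times\mathcal{A}\times\mathcal{S}$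 with $s'\mid(s,a)\sim T^\star(s,a)$; $\mu(s,a)$ also denotes its $(s,a)$-marginal. $\hat\mu$ is a given distribution on $\mathcal{S}\times\mathcal{A}$; $\mathrm{TV}(p,q)=\sum_x|p(x)-q(x)|$. Finite classes: $\mathcal{G}$ of functions $g:\mathcal{S}\to[0,V_{\max}]$, $\mathcal{T}$ of transitions (possibly $T^\star\notin\mathcal{T}$), $\Pi$ of policies. Cutoff $\zeta>0$. $w_{\pi,T}(s,a)=\mathbf{1}\{\rho^\pi_T(s,a)/\hat\mu(s,a)\le\zeta\}\rho^\pi_T(s,a)/\hat\mu(s,a)$ (ratio $+\infty$ if $\hat\mu(s,a)=0<\rho^\pi_T(s,a)$). $f^g_T(s,a)=\mathbb{E}_{s'\sim T(s,a)}g(s')$. $\ell_w(g,T)=\big|\frac1n\sum_i w(s_i,a_i)(f^g_T(s_i,a_i)-g(s_i'))\big|$. $\mathrm{lb}(T,\pi)=\eta(T,\pi)-\frac1{1-\gamma}\Big(\sup_{g\in\mathcal{G}}\ell_{w_{\pi,T}}(g,T)+V_{\max}\mathbb{E}_{(s,a)\sim\rho^\pi_T}[\mathbf{1}\{\rho^\pi_T(s,a)/\hat\mu(s,a)>\zeta\}]\Big)$. $\epsilon_\rho(\pi)=\inf_{T\in\mathcal{T}}\mathbb{E}_{(s,a)\sim\rho^\pi_{T^\star}}[\mathrm{TV}(T(s,a),T^\star(s,a))]$; $\epsilon_\mu(\pi)=\mathbb{E}_{(s,a)\sim\rho^\pi_{T^\star}}[\mathbf{1}\{\rho^\pi_{T^\star}(s,a)/\hat\mu(s,a)>\zeta/2\}]$.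 Event $\mathcal{E}$: for all $\pi\in\Pi,g\in\mathcal{G},T\in\mathcal{T}$, $|L(\pi,g,T)-l(\pi,g,T)|\le2V_{\max}\sqrt{\zeta\iota/n}$, where $L(\pi,g,T)=\mathbb{E}_{(s,a)\sim\mu}[w_{\pi,T}(s,a)(f^g_T(s,a)-f^g_{T^\star}(s,a))]$ and $l(\pi,g,T)=\frac1n\sum_i w_{\pi,T}(s_i,a_i)(f^g_T(s_i,a_i)-g(s_i'))$. *)

theory Defs
  imports "HOL-Probability.Probability"
begin

primrec sa_dist :: "('s \<Rightarrow> 'a \<Rightarrow> 's pmf) \<Rightarrow> ('s \<Rightarrow> 'a pmf) \<Rightarrow> 's \<Rightarrow> nat \<Rightarrow> ('s \<times> 'a) pmf" where
  "sa_dist T pol s0 0 = map_pmf (\<lambda>a. (s0, a)) (pol s0)"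
| "sa_dist T pol s0 (Suc t) =
     bind_pmf (sa_dist T pol s0 t)
       (\<lambda>(s, a). bind_pmf (T s a) (\<lambda>s'. map_pmf (\<lambda>a'. (s', a')) (pol s')))"

definition eta :: "real \<Rightarrow> ('s \<times> 'a \<Rightarrow> real) \<Rightarrow> 's \<Rightarrow> ('s \<Rightarrow> 'a \<Rightarrow> 's pmf) \<Rightarrow> ('s \<Rightarrow> 'a pmf) \<Rightarrow> real" where
  "eta \<gamma> r s0 T pol = (\<Sum>t. \<gamma> ^ t * measure_pmf.expectation (sa_dist T pol s0 t) r)"

definition occ :: "real \<Rightarrow> 's \<Rightarrow> ('s \<Rightarrow> 'a \<Rightarrow> 's pmf) \<Rightarrow> ('s \<Rightarrow> 'a pmf) \<Rightarrow> 's \<times> 'a \<Rightarrow> real" where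
  "occ \<gamma> s0 T pol x = (1 - \<gamma>) * (\<Sum>t. \<gamma> ^ t * pmf (sa_dist T pol s0 t) x)"

definition Eocc :: "real \<Rightarrow> 's \<Rightarrow> ('s \<Rightarrow> 'a \<Rightarrow> 's pmf) \<Rightarrow> ('s \<Rightarrow> 'a pmf) \<Rightarrow> ('s \<times> 'a \<Rightarrow> real) \<Rightarrow> real" where
  "Eocc \<gamma> s0 T pol f = (\<Sum>\<^sub>\<infinity>x. occ \<gamma> s0 T pol x * f x)"

text \<open>TV(p,q) = sum_x |p(x) - q(x)| (no factor 1/2, as in the paper).\<close>
definition TV :: "'x pmf \<Rightarrow> 'x pmf \<Rightarrow> real" where
  "TV p q = (\<Sum>\<^sub>\<infinity>x. \<bar>pmf p x - pmf q x\<bar>)"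

text \<open>The ratio rho(x)/muhat(x) exceeds c, with the convention that the ratio is +infinity
  when muhat(x) = 0 < rho(x) (and 0 when both vanish).\<close>
definition ratio_gt :: "('x \<Rightarrow> real) \<Rightarrow> 'x pmf \<Rightarrow> real \<Rightarrow> 'x \<Rightarrow> bool" where
  "ratio_gt \<rho> muh c x = (if pmf muh x = 0 then \<rho> x > 0 else \<rho> x / pmf muh x > c)"

definition wgt :: "real \<Rightarrow> ('x \<Rightarrow> real) \<Rightarrow> 'x pmf \<Rightarrow> 'x \<Rightarrow> real" where
  "wgt \<zeta> \<rho> muh x = (if ratio_gt \<rho> muh \<zeta> x then 0 else \<rho> x / pmf muh x)"

definition fT :: "('s \<Rightarrow> 'a \<Rightarrow> 's pmf) \<Rightarrow> ('s \<Rightarrow> real) \<Rightarrow> 's \<times> 'a \<Rightarrow> real" where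
  "fT T g x = measure_pmf.expectation (T (fst x) (snd x)) g"

definition lemp :: "('s \<times> 'a \<times> 's) list \<Rightarrow> ('s \<times> 'a \<Rightarrow> real) \<Rightarrow> ('s \<Rightarrow> real) \<Rightarrow> ('s \<Rightarrow> 'a \<Rightarrow> 's pmf) \<Rightarrow> real" where
  "lemp D w g T = (\<Sum>(s, a, s')\<leftarrow>D. w (s, a) * (fT T g (s, a) - g s')) / real (length D)"

definition Rmax :: "('s \<times> 'a \<Rightarrow> real) \<Rightarrow> real" where
  "Rmax r = (SUP x. r x)"

definition Vmax :: "real \<Rightarrow> ('s \<times> 'a \<Rightarrow> real) \<Rightarrow> real" where
  "Vmax \<gamma> r = Rmax r / (1 - \<gamma>)"

definition lb :: "real \<Rightarrow> ('s \<times> 'a \<Rightarrow> real) \<Rightarrow> 's \<Rightarrow> real \<Rightarrow> ('s \<times> 'a) pmf \<Rightarrow>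
    ('s \<times> 'a \<times> 's) list \<Rightarrow> ('s \<Rightarrow> real) set \<Rightarrow> ('s \<Rightarrow> 'a \<Rightarrow> 's pmf) \<Rightarrow> ('s \<Rightarrow> 'a pmf) \<Rightarrow> real" where
  "lb \<gamma> r s0 \<zeta> muh D G T pol =
     eta \<gamma> r s0 T pol
     - 1 / (1 - \<gamma>) *
       (Max ((\<lambda>g. \<bar>lemp D (wgt \<zeta> (occ \<gamma> s0 T pol) muh) g T\<bar>) ` G)
        + Vmax \<gamma> r * Eocc \<gamma> s0 T pol
            (\<lambda>x. if ratio_gt (occ \<gamma> s0 T pol) muh \<zeta> x then 1 else 0))"

definition eps_rho :: "real \<Rightarrow> 's \<Rightarrow> ('s \<Rightarrow> 'a \<Rightarrow> 's pmf) set \<Rightarrow> ('s \<Rightarrow> 'a \<Rightarrow> 's pmf) \<Rightarrow> ('s \<Rightarrow> 'a pmf) \<Rightarrow> real" where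
  "eps_rho \<gamma> s0 TT Tstar pol =
     (INF T\<in>TT. Eocc \<gamma> s0 Tstar pol (\<lambda>(s, a). TV (T s a) (Tstar s a)))"

definition eps_mu :: "real \<Rightarrow> 's \<Rightarrow> real \<Rightarrow> ('s \<times> 'a) pmf \<Rightarrow> ('s \<Rightarrow> 'a \<Rightarrow> 's pmf) \<Rightarrow> ('s \<Rightarrow> 'a pmf) \<Rightarrow> real" where
  "eps_mu \<gamma> s0 \<zeta> muh Tstar pol =
     Eocc \<gamma> s0 Tstar pol (\<lambda>x. if ratio_gt (occ \<gamma> s0 Tstar pol) muh (\<zeta> / 2) x then 1 else 0)"

definition sa_marg :: "('s \<times> 'a \<times> 's) pmf \<Rightarrow> ('s \<times> 'a) pmf" where
  "sa_marg mu = map_pmf (\<lambda>(s, a, s'). (s, a)) mu"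

definition Lpop :: "real \<Rightarrow> 's \<Rightarrow> real \<Rightarrow> ('s \<times> 'a) pmf \<Rightarrow> ('s \<times> 'a \<times> 's) pmf \<Rightarrow>
    ('s \<Rightarrow> 'a \<Rightarrow> 's pmf) \<Rightarrow> ('s \<Rightarrow> 'a pmf) \<Rightarrow> ('s \<Rightarrow> real) \<Rightarrow> ('s \<Rightarrow> 'a \<Rightarrow> 's pmf) \<Rightarrow> real" where
  "Lpop \<gamma> s0 \<zeta> muh mu Tstar pol g T =
     measure_pmf.expectation (sa_marg mu)
       (\<lambda>x. wgt \<zeta> (occ \<gamma> s0 T pol) muh x * (fT T g x - fT Tstar g x))"

definition lsamp :: "real \<Rightarrow> 's \<Rightarrow> real \<Rightarrow> ('s \<times> 'a) pmf \<Rightarrow> ('s \<times> 'a \<times> 's) list \<Rightarrow>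
    ('s \<Rightarrow> 'a pmf) \<Rightarrow> ('s \<Rightarrow> real) \<Rightarrow> ('s \<Rightarrow> 'a \<Rightarrow> 's pmf) \<Rightarrow> real" where
  "lsamp \<gamma> s0 \<zeta> muh D pol g T = lemp D (wgt \<zeta> (occ \<gamma> s0 T pol) muh) g T"

end

theory Submission
  imports Defs
begin

(* Choose T0 in TT attaining eps_rho. A simulation argument bounds the total variation
   between the occupancy measures of T0 and Tstar by gamma / (1 - gamma) * eps_rho, since
   every step adds at most the expected one-step error. This gap controls each term of
   lb(T0, pi): the value, the occupancy mass above the cutoff zeta (compared with the mass
   of the true occupancy above zeta / 2), and the population loss L, whose clipped weight w
   satisfies muh * w <= rho. Replacing mu by muh in L costs zeta * Vmax * TV(muh, mu), and
   on the event E the empirical loss is within 2 Vmax sqrt(zeta iota / n) of L. *)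

lemma has_sum_diff:
  fixes f g :: "'a \<Rightarrow> 'b::topological_ab_group_add"
  assumes "(f has_sum a) A" "(g has_sum b) A"
  shows "((\<lambda>x. f x - g x) has_sum (a - b)) A"
proof -
  have "((\<lambda>x. - g x) has_sum - b) A"
    using assms(2) by (simp add: has_sum_uminus)
  from has_sum_add[OF assms(1) this] show ?thesis
    by simp
qed

lemma integrable_measure_pmf_bounded:
  fixes h :: "'x \<Rightarrow> real"
  assumes "\<And>x. \<bar>h x\<bar> \<le> B"
  shows "integrable (measure_pmf p) h"
  using assms by (intro measure_pmf.integrable_const_bound[where B=B]) auto

lemma abs_expectation_pmf_le:
  fixes h :: "'x \<Rightarrow> real"
  assumes "\<And>x. \<bar>h x\<bar> \<le> B"
  shows "\<bar>measure_pmf.expectation p h\<bar> \<le> B"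
proof -
  have "\<bar>measure_pmf.expectation p h\<bar> \<le> measure_pmf.expectation p (\<lambda>x. \<bar>h x\<bar>)"
    by (rule integral_abs_bound)
  also have "\<dots> \<le> B"
    using assms integrable_measure_pmf_bounded[of "\<lambda>x. \<bar>h x\<bar>" B]
    by (intro measure_pmf.integral_le_const) auto
  finally show ?thesis .
qed

lemma expectation_bind_pmf_bounded:
  fixes f :: "'y \<Rightarrow> real"
  assumes "\<And>y. \<bar>f y\<bar> \<le> B"
  shows "measure_pmf.expectation (bind_pmf p N) f
       = measure_pmf.expectation p (\<lambda>x. measure_pmf.expectation (N x) f)"
  unfolding measure_pmf_bind
  using assms by (intro integral_bind[where K="count_space UNIV" and B=B and B'=1])
    (auto simp: measure_pmf_in_subprob_algebra)

lemma has_sum_expectation_pmf: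
  fixes p :: "'x::countable pmf" and h :: "'x \<Rightarrow> real"
  assumes "\<And>x. \<bar>h x\<bar> \<le> B"
  shows "((\<lambda>x. pmf p x * h x) has_sum measure_pmf.expectation p h) UNIV"
proof -
  have "Infinite_Set_Sum.abs_summable_on (\<lambda>x. pmf p x * h x) UNIV"
  proof (rule abs_summable_on_comparison_test)
    show "Infinite_Set_Sum.abs_summable_on (\<lambda>x. pmf p x * B) UNIV"
      using pmf_abs_summable by (rule abs_summable_on_cmult_left)
    show "norm (pmf p x * h x) \<le> norm (pmf p x * B)" for x
      using assms[of x] by (simp add: abs_mult mult_left_mono)
  qed
  moreover have "measure_pmf.expectation p h = infsetsum (\<lambda>x. pmf p x * h x) UNIV"
    unfolding measure_pmf_eq_density infsetsum_def by (subst integral_density) auto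
  ultimately show ?thesis
    by (metis abs_summable_equivalent abs_summable_summable has_sum_infsum infsetsum_infsum)
qed

definition TV_witness :: "'x pmf \<Rightarrow> 'x pmf \<Rightarrow> 'x \<Rightarrow> real" where
  "TV_witness p q x = sgn (pmf p x - pmf q x)"

lemma abs_TV_witness_le: "\<bar>TV_witness p q x\<bar> \<le> 1"
  by (simp add: TV_witness_def sgn_real_def)

lemma has_sum_abs_pmf_diff:
  fixes p q :: "'x::countable pmf"
  shows "((\<lambda>x. \<bar>pmf p x - pmf q x\<bar>) has_sum
           measure_pmf.expectation p (TV_witness p q) - measure_pmf.expectation q (TV_witness p q)) UNIV"
proof -
  have "\<bar>pmf p x - pmf q x\<bar> = pmf p x * TV_witness p q x - pmf q x * TV_witness p q x" for x
    by (auto simp: TV_witness_def sgn_real_def algebra_simps)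
  then show ?thesis
    using has_sum_diff[OF has_sum_expectation_pmf has_sum_expectation_pmf,
        OF abs_TV_witness_le abs_TV_witness_le]
    by simp
qed

lemma TV_eq_expectation_TV_witness:
  fixes p q :: "'x::countable pmf"
  shows "TV p q = measure_pmf.expectation p (TV_witness p q) - measure_pmf.expectation q (TV_witness p q)"
  unfolding TV_def using has_sum_abs_pmf_diff by (rule infsumI)

lemma has_sum_TV:
  fixes p q :: "'x::countable pmf"
  shows "((\<lambda>x. \<bar>pmf p x - pmf q x\<bar>) has_sum TV p q) UNIV"
  unfolding TV_eq_expectation_TV_witness by (rule has_sum_abs_pmf_diff)

lemma abs_expectation_diff_le_TV:
  fixes p q :: "'x::countable pmf" and h :: "'x \<Rightarrow> real"
  assumes "\<And>x. \<bar>h x\<bar> \<le> B"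
  shows "\<bar>measure_pmf.expectation p h - measure_pmf.expectation q h\<bar> \<le> B * TV p q"
proof -
  have diff: "((\<lambda>x. pmf p x * h x - pmf q x * h x) has_sum
          measure_pmf.expectation p h - measure_pmf.expectation q h) UNIV"
    using assms by (intro has_sum_diff has_sum_expectation_pmf)
  have bound: "((\<lambda>x. B * \<bar>pmf p x - pmf q x\<bar>) has_sum B * TV p q) UNIV"
    by (intro has_sum_cmult_right has_sum_TV)
  have pointwise: "\<bar>pmf p x * h x - pmf q x * h x\<bar> \<le> B * \<bar>pmf p x - pmf q x\<bar>" for x
  proof -
    have "\<bar>pmf p x * h x - pmf q x * h x\<bar> = \<bar>pmf p x - pmf q x\<bar> * \<bar>h x\<bar>"
      by (simp add: abs_mult flip: left_diff_distrib)
    also have "\<dots> \<le> \<bar>pmf p x - pmf q x\<bar> * B"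
      using assms[of x] by (intro mult_left_mono) auto
    finally show ?thesis by (simp add: mult.commute)
  qed
  have "measure_pmf.expectation p h - measure_pmf.expectation q h \<le> B * TV p q"
    using pointwise by (intro has_sum_mono[OF diff bound]) (simp add: abs_le_iff)
  moreover have "- (B * TV p q) \<le> measure_pmf.expectation p h - measure_pmf.expectation q h"
  proof (rule has_sum_mono[OF _ diff])
    show "((\<lambda>x. - (B * \<bar>pmf p x - pmf q x\<bar>)) has_sum - (B * TV p q)) UNIV"
      using bound by (simp add: has_sum_uminus)
    show "- (B * \<bar>pmf p x - pmf q x\<bar>) \<le> pmf p x * h x - pmf q x * h x" for x
      using pointwise[of x] by (simp add: abs_le_iff)
  qed
  ultimately show ?thesis
    by linarith
qed

lemma TV_nonneg: "0 \<le> TV p q"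
  unfolding TV_def by (rule infsum_nonneg) auto

lemma TV_same: "TV p p = 0"
  unfolding TV_def by simp

lemma TV_le_2:
  fixes p q :: "'x::countable pmf"
  shows "TV p q \<le> 2"
proof -
  have "\<bar>measure_pmf.expectation p (TV_witness p q)\<bar> \<le> 1"
    and "\<bar>measure_pmf.expectation q (TV_witness p q)\<bar> \<le> 1"
    by (rule abs_expectation_pmf_le[OF abs_TV_witness_le])+
  then show ?thesis
    unfolding TV_eq_expectation_TV_witness by linarith
qed

lemma abs_TV_le_2:
  fixes p q :: "'x::countable pmf"
  shows "\<bar>TV p q\<bar> \<le> 2"
  using TV_nonneg[of p q] TV_le_2[of p q] by simp

lemma TV_triangle:
  fixes p q r :: "'x::countable pmf"
  shows "TV p r \<le> TV p q + TV q r"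
  by (rule has_sum_mono[OF has_sum_TV has_sum_add[OF has_sum_TV has_sum_TV]]) auto

lemma TV_bind_pmf_le_expectation_TV:
  fixes p :: "'x pmf" and f g :: "'x \<Rightarrow> 'y::countable pmf"
  shows "TV (bind_pmf p f) (bind_pmf p g) \<le> measure_pmf.expectation p (\<lambda>x. TV (f x) (g x))"
proof -
  define w where "w = TV_witness (bind_pmf p f) (bind_pmf p g)"
  have w_bound: "\<bar>w y\<bar> \<le> 1" for y
    unfolding w_def by (rule abs_TV_witness_le)
  have integrable: "integrable (measure_pmf p) (\<lambda>x. measure_pmf.expectation (N x) w)"
    for N :: "'x \<Rightarrow> 'y pmf"
    by (rule integrable_measure_pmf_bounded[OF abs_expectation_pmf_le[OF w_bound]])
  have "TV (bind_pmf p f) (bind_pmf p g)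
      = measure_pmf.expectation (bind_pmf p f) w - measure_pmf.expectation (bind_pmf p g) w"
    unfolding w_def by (rule TV_eq_expectation_TV_witness)
  also have "\<dots> = measure_pmf.expectation p
                   (\<lambda>x. measure_pmf.expectation (f x) w - measure_pmf.expectation (g x) w)"
    by (simp add: expectation_bind_pmf_bounded[OF w_bound] integrable)
  also have "\<dots> \<le> measure_pmf.expectation p (\<lambda>x. TV (f x) (g x))"
  proof (rule integral_mono)
    show "integrable (measure_pmf p)
            (\<lambda>x. measure_pmf.expectation (f x) w - measure_pmf.expectation (g x) w)"
      using integrable by simp
    show "integrable (measure_pmf p) (\<lambda>x. TV (f x) (g x))"
      by (rule integrable_measure_pmf_bounded[OF abs_TV_le_2])
    show "measure_pmf.expectation (f x) w - measure_pmf.expectation (g x) w \<le> TV (f x) (g x)" for x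
      using abs_expectation_diff_le_TV[where h=w and p="f x" and q="g x", OF w_bound] by simp
  qed
  finally show ?thesis .
qed

lemma TV_bind_pmf_le_TV:
  fixes p q :: "'x::countable pmf" and f :: "'x \<Rightarrow> 'y::countable pmf"
  shows "TV (bind_pmf p f) (bind_pmf q f) \<le> TV p q"
proof -
  define w where "w = TV_witness (bind_pmf p f) (bind_pmf q f)"
  have w_bound: "\<bar>w y\<bar> \<le> 1" for y
    unfolding w_def by (rule abs_TV_witness_le)
  have "TV (bind_pmf p f) (bind_pmf q f)
      = measure_pmf.expectation p (\<lambda>x. measure_pmf.expectation (f x) w)
        - measure_pmf.expectation q (\<lambda>x. measure_pmf.expectation (f x) w)"
    unfolding TV_eq_expectation_TV_witness w_def[symmetric]
    by (simp add: expectation_bind_pmf_bounded[OF w_bound])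
  also have "\<dots> \<le> 1 * TV p q"
    using abs_expectation_diff_le_TV[OF abs_expectation_pmf_le[OF w_bound]] by (rule abs_le_D1)
  finally show ?thesis by simp
qed

lemma sums_discounted_expectation_geometric:
  fixes h :: "nat \<Rightarrow> real"
  assumes "0 \<le> \<gamma>" "\<gamma> < 1" and "\<And>t. \<bar>h t\<bar> \<le> B"
  shows "(\<lambda>t. \<gamma> ^ t * h t) sums (measure_pmf.expectation (geometric_pmf (1 - \<gamma>)) h / (1 - \<gamma>))"
proof -
  have "(\<lambda>t. \<gamma> ^ t * (1 - \<gamma>) * h t) sums measure_pmf.expectation (geometric_pmf (1 - \<gamma>)) h"
    using has_sum_imp_sums[OF has_sum_expectation_pmf[where p="geometric_pmf (1 - \<gamma>)" and h=h, OF assms(3)]]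
      assms(1,2)
    by simp
  from sums_divide[OF this, of "1 - \<gamma>"] show ?thesis
    using assms(2) by simp
qed

text \<open>The discounted occupancy measure is the law of the state-action pair at an
  independent time with geometric distribution of parameter \<open>1 - \<gamma>\<close>.\<close>
definition occ_pmf ::
    "real \<Rightarrow> 's \<Rightarrow> ('s \<Rightarrow> 'a \<Rightarrow> 's pmf) \<Rightarrow> ('s \<Rightarrow> 'a pmf) \<Rightarrow> ('s \<times> 'a) pmf" where
  "occ_pmf \<gamma> s0 T pol = bind_pmf (geometric_pmf (1 - \<gamma>)) (sa_dist T pol s0)"

lemma expectation_occ_pmf:
  fixes f :: "'s \<times> 'a \<Rightarrow> real"
  assumes "0 \<le> \<gamma>" "\<gamma> < 1" and f_bound: "\<And>x. \<bar>f x\<bar> \<le> B"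
  shows "measure_pmf.expectation (occ_pmf \<gamma> s0 T pol) f
       = (1 - \<gamma>) * (\<Sum>t. \<gamma> ^ t * measure_pmf.expectation (sa_dist T pol s0 t) f)"
proof -
  have "\<bar>measure_pmf.expectation (sa_dist T pol s0 t) f\<bar> \<le> B" for t
    by (rule abs_expectation_pmf_le[OF f_bound])
  from sums_unique[OF sums_discounted_expectation_geometric[
        where h="\<lambda>t. measure_pmf.expectation (sa_dist T pol s0 t) f", OF assms(1,2) this]]
  show ?thesis
    using assms(2) by (simp add: occ_pmf_def expectation_bind_pmf_bounded[OF f_bound] field_simps)
qed

lemma occ_eq_pmf_occ_pmf:
  assumes "0 \<le> \<gamma>" "\<gamma> < 1"
  shows "occ \<gamma> s0 T pol = pmf (occ_pmf \<gamma> s0 T pol)"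
proof
  fix x
  have "\<bar>pmf (sa_dist T pol s0 t) x\<bar> \<le> 1" for t
    by (simp add: pmf_le_1)
  from sums_unique[OF sums_discounted_expectation_geometric[
        where h="\<lambda>t. pmf (sa_dist T pol s0 t) x", OF assms this]]
  show "occ \<gamma> s0 T pol x = pmf (occ_pmf \<gamma> s0 T pol) x"
    using assms(2) by (simp add: occ_def occ_pmf_def pmf_bind field_simps)
qed

lemma Eocc_eq_expectation:
  fixes f :: "'s::countable \<times> 'a::countable \<Rightarrow> real"
  assumes "0 \<le> \<gamma>" "\<gamma> < 1" and "\<And>x. \<bar>f x\<bar> \<le> B"
  shows "Eocc \<gamma> s0 T pol f = measure_pmf.expectation (occ_pmf \<gamma> s0 T pol) f"
  unfolding Eocc_def occ_eq_pmf_occ_pmf[OF assms(1,2)]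
  using has_sum_expectation_pmf[OF assms(3)] by (rule infsumI)

lemma eta_eq_expectation:
  fixes r :: "'s \<times> 'a \<Rightarrow> real"
  assumes "0 \<le> \<gamma>" "\<gamma> < 1" and "\<And>x. \<bar>r x\<bar> \<le> B"
  shows "eta \<gamma> r s0 T pol = measure_pmf.expectation (occ_pmf \<gamma> s0 T pol) r / (1 - \<gamma>)"
  unfolding eta_def expectation_occ_pmf[OF assms] using assms(2) by simp

lemma TV_sa_dist_Suc_le:
  fixes T T' :: "'s::countable \<Rightarrow> 'a::countable \<Rightarrow> 's pmf"
  shows "TV (sa_dist T pol s0 (Suc t)) (sa_dist T' pol s0 (Suc t))
     \<le> TV (sa_dist T pol s0 t) (sa_dist T' pol s0 t)
       + measure_pmf.expectation (sa_dist T' pol s0 t) (\<lambda>(s, a). TV (T s a) (T' s a))"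
proof -
  define K where "K T'' = (\<lambda>(s, a). bind_pmf (T'' s a) (\<lambda>s'. map_pmf (\<lambda>a'. (s', a')) (pol s')))"
    for T'' :: "'s \<Rightarrow> 'a \<Rightarrow> 's pmf"
  have step: "sa_dist T'' pol s0 (Suc t) = bind_pmf (sa_dist T'' pol s0 t) (K T'')" for T''
    by (simp add: K_def)
  have "TV (sa_dist T pol s0 (Suc t)) (sa_dist T' pol s0 (Suc t))
      \<le> TV (bind_pmf (sa_dist T pol s0 t) (K T)) (bind_pmf (sa_dist T' pol s0 t) (K T))
        + TV (bind_pmf (sa_dist T' pol s0 t) (K T)) (bind_pmf (sa_dist T' pol s0 t) (K T'))"
    unfolding step by (rule TV_triangle)
  also have "\<dots> \<le> TV (sa_dist T pol s0 t) (sa_dist T' pol s0 t)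
      + measure_pmf.expectation (sa_dist T' pol s0 t) (\<lambda>x. TV (K T x) (K T' x))"
    by (intro add_mono TV_bind_pmf_le_TV TV_bind_pmf_le_expectation_TV)
  also have "measure_pmf.expectation (sa_dist T' pol s0 t) (\<lambda>x. TV (K T x) (K T' x))
      \<le> measure_pmf.expectation (sa_dist T' pol s0 t) (\<lambda>(s, a). TV (T s a) (T' s a))"
    by (intro integral_mono integrable_measure_pmf_bounded[where B=2])
      (auto simp: K_def TV_bind_pmf_le_TV abs_TV_le_2 split: prod.splits)
  finally show ?thesis by simp
qed

lemma discounted_suminf_le_of_increments:
  fixes a e :: "nat \<Rightarrow> real"
  assumes "0 \<le> \<gamma>" and "a 0 = 0" and increment: "\<And>t. a (Suc t) \<le> a t + e t"
    and a_summable: "summable (\<lambda>t. \<gamma> ^ t * a t)" and e_summable: "summable (\<lambda>t. \<gamma> ^ t * e t)"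
  shows "(1 - \<gamma>) * (\<Sum>t. \<gamma> ^ t * a t) \<le> \<gamma> * (\<Sum>t. \<gamma> ^ t * e t)"
proof -
  have "(\<Sum>t. \<gamma> ^ t * a t) = (\<Sum>t. \<gamma> ^ Suc t * a (Suc t))"
    using suminf_split_head[OF a_summable] \<open>a 0 = 0\<close> by simp
  also have "\<dots> \<le> (\<Sum>t. \<gamma> * (\<gamma> ^ t * a t + \<gamma> ^ t * e t))"
  proof (rule suminf_le)
    show "\<gamma> ^ Suc t * a (Suc t) \<le> \<gamma> * (\<gamma> ^ t * a t + \<gamma> ^ t * e t)" for t
      using mult_left_mono[OF increment[of t] zero_le_power[OF \<open>0 \<le> \<gamma>\<close>, of "Suc t"]]
      by (simp add: algebra_simps)
    show "summable (\<lambda>t. \<gamma> ^ Suc t * a (Suc t))"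
      using a_summable by (subst summable_Suc_iff)
    show "summable (\<lambda>t. \<gamma> * (\<gamma> ^ t * a t + \<gamma> ^ t * e t))"
      by (intro summable_mult summable_add a_summable e_summable)
  qed
  also have "\<dots> = \<gamma> * ((\<Sum>t. \<gamma> ^ t * a t) + (\<Sum>t. \<gamma> ^ t * e t))"
    by (simp add: suminf_mult suminf_add[OF a_summable e_summable] summable_add[OF a_summable e_summable])
  finally show ?thesis
    by (simp add: algebra_simps)
qed

lemma TV_occ_pmf_le:
  fixes T T' :: "'s::countable \<Rightarrow> 'a::countable \<Rightarrow> 's pmf"
  assumes "0 \<le> \<gamma>" "\<gamma> < 1"
  shows "TV (occ_pmf \<gamma> s0 T pol) (occ_pmf \<gamma> s0 T' pol)
     \<le> \<gamma> / (1 - \<gamma>) * measure_pmf.expectation (occ_pmf \<gamma> s0 T' pol) (\<lambda>(s, a). TV (T s a) (T' s a))"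
proof -
  define tv where "tv = (\<lambda>(s, a). TV (T s a) (T' s a))"
  define a where "a t = TV (sa_dist T pol s0 t) (sa_dist T' pol s0 t)" for t
  define e where "e t = measure_pmf.expectation (sa_dist T' pol s0 t) tv" for t
  have tv_bound: "\<bar>tv x\<bar> \<le> 2" for x
    by (simp add: tv_def abs_TV_le_2 split: prod.split)
  have a_bound: "\<bar>a t\<bar> \<le> 2" for t
    unfolding a_def by (rule abs_TV_le_2)
  have a_sums: "(\<lambda>t. \<gamma> ^ t * a t) sums (measure_pmf.expectation (geometric_pmf (1 - \<gamma>)) a / (1 - \<gamma>))"
    using assms a_bound by (rule sums_discounted_expectation_geometric)
  have e_bound: "\<bar>e t\<bar> \<le> 2" for t
    unfolding e_def by (rule abs_expectation_pmf_le[OF tv_bound])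
  have e_sums: "(\<lambda>t. \<gamma> ^ t * e t) sums (measure_pmf.expectation (occ_pmf \<gamma> s0 T' pol) tv / (1 - \<gamma>))"
    using sums_discounted_expectation_geometric[OF assms e_bound]
    unfolding occ_pmf_def expectation_bind_pmf_bounded[OF tv_bound] e_def .
  have "TV (occ_pmf \<gamma> s0 T pol) (occ_pmf \<gamma> s0 T' pol) \<le> measure_pmf.expectation (geometric_pmf (1 - \<gamma>)) a"
    unfolding occ_pmf_def a_def by (rule TV_bind_pmf_le_expectation_TV)
  also have "\<dots> = (1 - \<gamma>) * (\<Sum>t. \<gamma> ^ t * a t)"
    using sums_unique[OF a_sums] assms(2) by (simp add: field_simps)
  also have "\<dots> \<le> \<gamma> * (\<Sum>t. \<gamma> ^ t * e t)"
  proof (rule discounted_suminf_le_of_increments[OF assms(1)])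
    show "a 0 = 0" by (simp add: a_def TV_same)
    show "a (Suc t) \<le> a t + e t" for t
      unfolding a_def e_def tv_def by (rule TV_sa_dist_Suc_le)
  qed (use a_sums e_sums in \<open>auto dest: sums_summable\<close>)
  also have "\<dots> = \<gamma> / (1 - \<gamma>) * measure_pmf.expectation (occ_pmf \<gamma> s0 T' pol) tv"
    using sums_unique[OF e_sums] by (simp flip: times_divide_eq_right)
  finally show ?thesis
    unfolding tv_def .
qed

lemma wgt_nonneg:
  assumes "0 \<le> \<rho> x"
  shows "0 \<le> wgt \<zeta> \<rho> muh x"
  using assms by (simp add: wgt_def)

lemma wgt_le:
  assumes "0 \<le> \<zeta>"
  shows "wgt \<zeta> \<rho> muh x \<le> \<zeta>"
  using assms by (auto simp: wgt_def ratio_gt_def)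

lemma pmf_mult_wgt_le:
  assumes "0 \<le> \<rho> x"
  shows "pmf muh x * wgt \<zeta> \<rho> muh x \<le> \<rho> x"
  using assms by (simp add: wgt_def)

lemma expectation_wgt_mult_le:
  fixes \<rho> muh :: "'x::countable pmf" and f :: "'x \<Rightarrow> real"
  assumes "0 \<le> \<zeta>" and f_nonneg: "\<And>x. 0 \<le> f x" and f_le: "\<And>x. f x \<le> B"
  shows "measure_pmf.expectation muh (\<lambda>x. wgt \<zeta> (pmf \<rho>) muh x * f x) \<le> measure_pmf.expectation \<rho> f"
proof (rule has_sum_mono[OF has_sum_expectation_pmf has_sum_expectation_pmf])
  show "\<bar>wgt \<zeta> (pmf \<rho>) muh x * f x\<bar> \<le> \<zeta> * B" for x
  proof -
    have "wgt \<zeta> (pmf \<rho>) muh x * f x \<le> \<zeta> * B"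
      using wgt_le[OF assms(1)] f_nonneg[of x] f_le[of x] assms(1) by (intro mult_mono) auto
    then show ?thesis
      using wgt_nonneg[of "pmf \<rho>" x] f_nonneg[of x] by simp
  qed
  show "\<bar>f x\<bar> \<le> B" for x
    using f_nonneg[of x] f_le[of x] by simp
  show "pmf muh x * (wgt \<zeta> (pmf \<rho>) muh x * f x) \<le> pmf \<rho> x * f x" for x
    using mult_right_mono[OF pmf_mult_wgt_le[of "pmf \<rho>" x muh \<zeta>] f_nonneg[of x]]
    by (simp add: mult.assoc)
qed

lemma mult_ratio_gt_le_half:
  fixes \<rho> \<rho>' :: "'x \<Rightarrow> real"
  assumes "0 \<le> \<rho>' x"
  shows "\<rho>' x * (if ratio_gt \<rho> muh \<zeta> x then 1 else 0)
     \<le> \<rho>' x * (if ratio_gt \<rho>' muh (\<zeta> / 2) x then 1 else 0) + \<bar>\<rho> x - \<rho>' x\<bar>"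
proof (cases "ratio_gt \<rho> muh \<zeta> x \<and> \<not> ratio_gt \<rho>' muh (\<zeta> / 2) x")
  case True
  \<comment> \<open>then \<open>2 \<rho>' x \<le> \<zeta> muh x < \<rho> x\<close>\<close>
  have "\<rho>' x \<le> \<rho> x - \<rho>' x"
  proof (cases "pmf muh x = 0")
    case False
    then have "0 < pmf muh x"
      by (simp add: order_less_le)
    then show ?thesis
      using True False by (auto simp: ratio_gt_def field_simps)
  qed (use True assms in \<open>auto simp: ratio_gt_def\<close>)
  then show ?thesis
    using True by simp
qed (use assms in auto)

lemma abs_le_Rmax:
  assumes "\<And>x. 0 \<le> r x" and "bdd_above (range r)"
  shows "\<bar>r x\<bar> \<le> Rmax r"
  using assms cSUP_upper[OF UNIV_I assms(2)] by (simp add: Rmax_def)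

lemma Vmax_nonneg:
  assumes "\<gamma> < 1" and "\<And>x. 0 \<le> r x" and "bdd_above (range r)"
  shows "0 \<le> Vmax \<gamma> r"
  using abs_le_Rmax[OF assms(2,3), of undefined] assms(1) by (simp add: Vmax_def)

lemma abs_eta_diff_le:
  fixes T T' :: "'s::countable \<Rightarrow> 'a::countable \<Rightarrow> 's pmf"
  assumes "0 \<le> \<gamma>" "\<gamma> < 1" and "\<And>x. 0 \<le> r x" and "bdd_above (range r)"
  shows "\<bar>eta \<gamma> r s0 T pol - eta \<gamma> r s0 T' pol\<bar>
     \<le> Vmax \<gamma> r * TV (occ_pmf \<gamma> s0 T pol) (occ_pmf \<gamma> s0 T' pol)"
proof -
  note r_bound = abs_le_Rmax[OF assms(3,4)]
  have "\<bar>eta \<gamma> r s0 T pol - eta \<gamma> r s0 T' pol\<bar>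
      = \<bar>measure_pmf.expectation (occ_pmf \<gamma> s0 T pol) r
         - measure_pmf.expectation (occ_pmf \<gamma> s0 T' pol) r\<bar> / (1 - \<gamma>)"
    using assms(2) by (simp add: eta_eq_expectation[OF assms(1,2) r_bound] flip: diff_divide_distrib)
  also have "\<dots> \<le> Rmax r * TV (occ_pmf \<gamma> s0 T pol) (occ_pmf \<gamma> s0 T' pol) / (1 - \<gamma>)"
    using assms(2) by (intro divide_right_mono abs_expectation_diff_le_TV[OF r_bound]) auto
  finally show ?thesis
    by (simp add: Vmax_def)
qed

lemma Eocc_ratio_gt_le:
  fixes T T' :: "'s::countable \<Rightarrow> 'a::countable \<Rightarrow> 's pmf"
  assumes "0 \<le> \<gamma>" "\<gamma> < 1"
  shows "Eocc \<gamma> s0 T pol (\<lambda>x. if ratio_gt (occ \<gamma> s0 T pol) muh \<zeta> x then 1 else 0)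
     \<le> eps_mu \<gamma> s0 \<zeta> muh T' pol + 2 * TV (occ_pmf \<gamma> s0 T pol) (occ_pmf \<gamma> s0 T' pol)"
proof -
  define \<rho> \<rho>' where "\<rho> = occ_pmf \<gamma> s0 T pol" and "\<rho>' = occ_pmf \<gamma> s0 T' pol"
  define I I' where "I x = (if ratio_gt (pmf \<rho>) muh \<zeta> x then 1 else 0 :: real)"
    and "I' x = (if ratio_gt (pmf \<rho>') muh (\<zeta> / 2) x then 1 else 0 :: real)" for x
  have I_bound: "\<bar>I x\<bar> \<le> 1" and I'_bound: "\<bar>I' x\<bar> \<le> 1" for x
    by (simp_all add: I_def I'_def)
  have I_eq: "(\<lambda>x. if ratio_gt (occ \<gamma> s0 T pol) muh \<zeta> x then 1 else 0) = I"
    and I'_eq: "(\<lambda>x. if ratio_gt (occ \<gamma> s0 T' pol) muh (\<zeta> / 2) x then 1 else 0) = I'"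
    by (simp_all add: fun_eq_iff I_def I'_def \<rho>_def \<rho>'_def occ_eq_pmf_occ_pmf[OF assms])
  have "Eocc \<gamma> s0 T pol (\<lambda>x. if ratio_gt (occ \<gamma> s0 T pol) muh \<zeta> x then 1 else 0)
      = measure_pmf.expectation \<rho> I"
    unfolding I_eq \<rho>_def by (rule Eocc_eq_expectation[OF assms I_bound])
  also have "\<dots> \<le> measure_pmf.expectation \<rho>' I + TV \<rho> \<rho>'"
    using abs_expectation_diff_le_TV[where h=I, OF I_bound, of \<rho> \<rho>'] by simp
  also have "measure_pmf.expectation \<rho>' I \<le> measure_pmf.expectation \<rho>' I' + TV \<rho> \<rho>'"
  proof (rule has_sum_mono[OF has_sum_expectation_pmf[OF I_bound]
        has_sum_add[OF has_sum_expectation_pmf[OF I'_bound] has_sum_TV]])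
    show "pmf \<rho>' x * I x \<le> pmf \<rho>' x * I' x + \<bar>pmf \<rho> x - pmf \<rho>' x\<bar>" for x
      unfolding I_def I'_def by (rule mult_ratio_gt_le_half) simp
  qed
  also have "measure_pmf.expectation \<rho>' I' = eps_mu \<gamma> s0 \<zeta> muh T' pol"
    unfolding eps_mu_def I'_eq \<rho>'_def by (rule Eocc_eq_expectation[OF assms I'_bound, symmetric])
  finally show ?thesis
    by (simp add: \<rho>_def \<rho>'_def)
qed

lemma abs_fT_diff_le_TV:
  fixes T T' :: "'s::countable \<Rightarrow> 'a \<Rightarrow> 's pmf"
  assumes "\<And>s. \<bar>g s\<bar> \<le> V"
  shows "\<bar>fT T g (s, a) - fT T' g (s, a)\<bar> \<le> V * TV (T s a) (T' s a)"
  unfolding fT_def using assms by (simp add: abs_expectation_diff_le_TV)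

lemma abs_fT_diff_le:
  assumes "\<And>s. 0 \<le> g s" and "\<And>s. g s \<le> V"
  shows "\<bar>fT T g x - fT T' g x\<bar> \<le> V"
proof -
  have "0 \<le> fT T'' g x \<and> fT T'' g x \<le> V" for T''
    unfolding fT_def using assms
    by (auto intro!: integral_nonneg measure_pmf.integral_le_const
        integrable_measure_pmf_bounded[where B=V] simp: abs_le_iff)
  from this[of T] this[of T'] show ?thesis
    by linarith
qed

lemma abs_Lpop_le:
  fixes T T' :: "'s::countable \<Rightarrow> 'a::countable \<Rightarrow> 's pmf"
  assumes "0 \<le> \<gamma>" "\<gamma> < 1" and "0 \<le> \<zeta>" and g_nonneg: "\<And>s. 0 \<le> g s" and g_le: "\<And>s. g s \<le> V"
  shows "\<bar>Lpop \<gamma> s0 \<zeta> muh mu T' pol g T\<bar>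
     \<le> \<zeta> * V * TV muh (sa_marg mu)
       + V * measure_pmf.expectation (occ_pmf \<gamma> s0 T pol) (\<lambda>(s, a). TV (T s a) (T' s a))"
proof -
  define \<rho> where "\<rho> = occ_pmf \<gamma> s0 T pol"
  define w where "w = wgt \<zeta> (pmf \<rho>) muh"
  define h where "h = (\<lambda>x. w x * (fT T g x - fT T' g x))"
  define tv where "tv = (\<lambda>(s, a). TV (T s a) (T' s a))"
  have V_nonneg: "0 \<le> V"
    using g_nonneg g_le order_trans by blast
  have tv_nonneg: "0 \<le> tv x" and tv_le_2: "tv x \<le> 2" for x
    by (simp_all add: tv_def TV_nonneg TV_le_2 split: prod.split)
  have w_nonneg: "0 \<le> w x" and w_le: "w x \<le> \<zeta>" for x
    unfolding w_def by (simp_all add: wgt_nonneg wgt_le assms(3))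
  have h_bound: "\<bar>h x\<bar> \<le> \<zeta> * V" for x
    unfolding h_def abs_mult using w_nonneg[of x] w_le[of x] assms(3)
      abs_fT_diff_le[where g=g and T=T and T'=T' and x=x, OF g_nonneg g_le]
    by (intro mult_mono) auto
  have h_le: "\<bar>h x\<bar> \<le> w x * (V * tv x)" for x
    using w_nonneg[of x] abs_fT_diff_le_TV[of g V T _ _ T'] g_nonneg g_le
    by (cases x) (simp add: h_def tv_def abs_mult mult_left_mono)
  have "\<bar>Lpop \<gamma> s0 \<zeta> muh mu T' pol g T\<bar> = \<bar>measure_pmf.expectation (sa_marg mu) h\<bar>"
    by (simp add: Lpop_def h_def w_def \<rho>_def occ_eq_pmf_occ_pmf[OF assms(1,2)])
  also have "\<dots> \<le> \<bar>measure_pmf.expectation muh h\<bar> + \<zeta> * V * TV muh (sa_marg mu)"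
    using abs_expectation_diff_le_TV[where h=h and p=muh and q="sa_marg mu", OF h_bound] by linarith
  also have "\<bar>measure_pmf.expectation muh h\<bar> \<le> measure_pmf.expectation muh (\<lambda>x. \<bar>h x\<bar>)"
    by (rule integral_abs_bound)
  also have "\<dots> \<le> measure_pmf.expectation muh (\<lambda>x. w x * (V * tv x))"
  proof (rule integral_mono[OF _ _ h_le])
    show "integrable (measure_pmf muh) (\<lambda>x. \<bar>h x\<bar>)"
      using h_bound by (intro integrable_measure_pmf_bounded[where B="\<zeta> * V"]) simp
    show "integrable (measure_pmf muh) (\<lambda>x. w x * (V * tv x))"
      using tv_nonneg tv_le_2 w_nonneg w_le V_nonneg assms(3)
      by (intro integrable_measure_pmf_bounded[where B="\<zeta> * (V * 2)"]) (simp add: abs_mult mult_mono)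
  qed
  also have "\<dots> \<le> measure_pmf.expectation \<rho> (\<lambda>x. V * tv x)"
    unfolding w_def using assms(3) tv_nonneg tv_le_2 V_nonneg
    by (intro expectation_wgt_mult_le[where B="V * 2"]) (simp_all add: mult_left_mono)
  finally show ?thesis
    by (simp add: \<rho>_def tv_def)
qed

lemma abs_lemp_le:
  fixes T T' :: "'s::countable \<Rightarrow> 'a::countable \<Rightarrow> 's pmf"
  assumes "0 \<le> \<gamma>" "\<gamma> < 1" and "0 \<le> \<zeta>" and "\<And>s. 0 \<le> g s" and "\<And>s. g s \<le> V"
    and "\<bar>Lpop \<gamma> s0 \<zeta> muh mu T' pol g T - lsamp \<gamma> s0 \<zeta> muh D pol g T\<bar> \<le> S"
  shows "\<bar>lemp D (wgt \<zeta> (occ \<gamma> s0 T pol) muh) g T\<bar>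
     \<le> S + \<zeta> * V * TV muh (sa_marg mu)
       + V * measure_pmf.expectation (occ_pmf \<gamma> s0 T pol) (\<lambda>(s, a). TV (T s a) (T' s a))"
proof -
  have "\<bar>Lpop \<gamma> s0 \<zeta> muh mu T' pol g T\<bar>
     \<le> \<zeta> * V * TV muh (sa_marg mu)
       + V * measure_pmf.expectation (occ_pmf \<gamma> s0 T pol) (\<lambda>(s, a). TV (T s a) (T' s a))"
    by (rule abs_Lpop_le[OF assms(1-5)])
  with assms(6) show ?thesis
    by (simp add: lsamp_def)
qed

lemma simulation_error_terms_le:
  fixes c V \<Delta> \<epsilon> :: real
  assumes "0 < c" "c \<le> 1" "0 \<le> V" "0 \<le> \<Delta>" "\<Delta> * c \<le> \<epsilon>"
  shows "V * \<Delta> + (V * \<epsilon> + 4 * V * \<Delta>) / c \<le> 6 * V * \<epsilon> / c\<^sup>2"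
proof -
  have "\<Delta> * c * c \<le> \<epsilon> * 1" "\<epsilon> * c \<le> \<epsilon> * 1"
    using assms mult_nonneg_nonneg[of \<Delta> c] by (intro mult_mono; linarith)+
  then have "\<Delta> * c\<^sup>2 + \<epsilon> * c + 4 * (\<Delta> * c) \<le> 6 * \<epsilon>"
    using assms(5) by (simp add: power2_eq_square)
  then have "V * (\<Delta> * c\<^sup>2 + \<epsilon> * c + 4 * (\<Delta> * c)) / c\<^sup>2 \<le> V * (6 * \<epsilon>) / c\<^sup>2"
    using assms(3) by (intro divide_right_mono mult_left_mono) auto
  moreover have "V * \<Delta> + (V * \<epsilon> + 4 * V * \<Delta>) / c
      = V * (\<Delta> * c\<^sup>2 + \<epsilon> * c + 4 * (\<Delta> * c)) / c\<^sup>2"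
    using assms(1) by (simp add: field_simps power2_eq_square)
  ultimately show ?thesis
    by (simp add: ac_simps)
qed

lemma lb_ge_eta_minus_errors:
  fixes T Tstar :: "'s::countable \<Rightarrow> 'a::countable \<Rightarrow> 's pmf"
  assumes gamma: "0 \<le> \<gamma>" "\<gamma> < 1" and r_nonneg: "\<And>x. 0 \<le> r x" and r_bdd: "bdd_above (range r)"
    and "0 < \<zeta>" and "finite G" "G \<noteq> {}"
    and G_range: "\<And>g s. g \<in> G \<Longrightarrow> 0 \<le> g s \<and> g s \<le> Vmax \<gamma> r"
    and event: "\<And>g. g \<in> G \<Longrightarrow>
      \<bar>Lpop \<gamma> s0 \<zeta> muh mu Tstar pol g T - lsamp \<gamma> s0 \<zeta> muh D pol g T\<bar> \<le> S"
  shows "eta \<gamma> r s0 Tstar pol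
       - 6 * Vmax \<gamma> r * Eocc \<gamma> s0 Tstar pol (\<lambda>(s, a). TV (T s a) (Tstar s a)) / (1 - \<gamma>)\<^sup>2
       - 1 / (1 - \<gamma>) * (Vmax \<gamma> r * eps_mu \<gamma> s0 \<zeta> muh Tstar pol + S
            + \<zeta> * Vmax \<gamma> r * TV muh (sa_marg mu))
     \<le> lb \<gamma> r s0 \<zeta> muh D G T pol"
proof -
  define V c where "V = Vmax \<gamma> r" and "c = 1 - \<gamma>"
  define tv where "tv = (\<lambda>(s, a). TV (T s a) (Tstar s a))"
  define \<Delta> where "\<Delta> = TV (occ_pmf \<gamma> s0 T pol) (occ_pmf \<gamma> s0 Tstar pol)"
  define \<epsilon> where "\<epsilon> = measure_pmf.expectation (occ_pmf \<gamma> s0 Tstar pol) tv"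
  define Z where "Z = \<zeta> * V * TV muh (sa_marg mu)"
  define M where "M = Max ((\<lambda>g. \<bar>lemp D (wgt \<zeta> (occ \<gamma> s0 T pol) muh) g T\<bar>) ` G)"
  define I where "I = Eocc \<gamma> s0 T pol (\<lambda>x. if ratio_gt (occ \<gamma> s0 T pol) muh \<zeta> x then 1 else 0)"
  have tv_bound: "\<bar>tv x\<bar> \<le> 2" for x
    by (simp add: tv_def abs_TV_le_2 split: prod.split)
  have V_nonneg: "0 \<le> V"
    unfolding V_def using gamma(2) r_nonneg r_bdd by (rule Vmax_nonneg)
  have c: "0 < c" "c \<le> 1"
    using gamma by (simp_all add: c_def)
  have \<epsilon>_nonneg: "0 \<le> \<epsilon>"
    unfolding \<epsilon>_def tv_def
    by (rule Bochner_Integration.integral_nonneg) (simp add: TV_nonneg split: prod.split)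
  have "\<Delta> * c \<le> \<gamma> * \<epsilon>"
    using TV_occ_pmf_le[OF gamma, of s0 T pol Tstar] c(1)
    by (simp add: \<Delta>_def \<epsilon>_def tv_def c_def field_simps)
  also have "\<dots> \<le> \<epsilon>"
    using gamma \<epsilon>_nonneg by (simp add: mult_left_le_one_le)
  finally have \<Delta>c_le: "\<Delta> * c \<le> \<epsilon>" .
  have eta_ge: "eta \<gamma> r s0 Tstar pol - V * \<Delta> \<le> eta \<gamma> r s0 T pol"
    using abs_eta_diff_le[OF gamma r_nonneg r_bdd, of s0 T pol Tstar] by (simp add: V_def \<Delta>_def)
  have I_le: "I \<le> eps_mu \<gamma> s0 \<zeta> muh Tstar pol + 2 * \<Delta>"
    unfolding I_def \<Delta>_def by (rule Eocc_ratio_gt_le[OF gamma])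
  have tv_le: "measure_pmf.expectation (occ_pmf \<gamma> s0 T pol) tv \<le> \<epsilon> + 2 * \<Delta>"
    using abs_expectation_diff_le_TV[where h=tv and p="occ_pmf \<gamma> s0 T pol" and q="occ_pmf \<gamma> s0 Tstar pol",
        OF tv_bound]
    by (simp add: \<epsilon>_def \<Delta>_def)
  have "\<bar>lemp D (wgt \<zeta> (occ \<gamma> s0 T pol) muh) g T\<bar> \<le> S + Z + V * (\<epsilon> + 2 * \<Delta>)" if "g \<in> G" for g
    using abs_lemp_le[OF gamma _ _ _ event[OF that], of V] \<open>0 < \<zeta>\<close> G_range[OF that]
      mult_left_mono[OF tv_le V_nonneg]
    by (fastforce simp: Z_def tv_def V_def)
  then have M_le: "M \<le> S + Z + V * (\<epsilon> + 2 * \<Delta>)"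
    unfolding M_def using \<open>finite G\<close> \<open>G \<noteq> {}\<close> by simp
  have "M + V * I \<le> (V * eps_mu \<gamma> s0 \<zeta> muh Tstar pol + S + Z) + (V * \<epsilon> + 4 * V * \<Delta>)"
    using M_le mult_left_mono[OF I_le V_nonneg] by (simp add: algebra_simps)
  then have "(M + V * I) / c
      \<le> (V * eps_mu \<gamma> s0 \<zeta> muh Tstar pol + S + Z) / c + (V * \<epsilon> + 4 * V * \<Delta>) / c"
    using c(1) by (simp add: divide_right_mono flip: add_divide_distrib)
  moreover have "V * \<Delta> + (V * \<epsilon> + 4 * V * \<Delta>) / c \<le> 6 * V * \<epsilon> / c\<^sup>2"
    using c V_nonneg TV_nonneg \<Delta>c_le unfolding \<Delta>_def by (intro simulation_error_terms_le) auto
  moreover have "lb \<gamma> r s0 \<zeta> muh D G T pol = eta \<gamma> r s0 T pol - (M + V * I) / c"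
    by (simp add: lb_def M_def I_def V_def c_def)
  moreover have "Eocc \<gamma> s0 Tstar pol (\<lambda>(s, a). TV (T s a) (Tstar s a)) = \<epsilon>"
    unfolding \<epsilon>_def tv_def[symmetric] by (rule Eocc_eq_expectation[OF gamma tv_bound])
  ultimately show ?thesis
    using eta_ge by (simp add: V_def c_def Z_def)
qed

theorem lemma3:
  fixes \<gamma> \<zeta> \<delta> \<iota> :: real
    and r :: "'s::countable \<times> 'a::countable \<Rightarrow> real"
    and s0 :: 's
    and Tstar :: "'s \<Rightarrow> 'a \<Rightarrow> 's pmf"
    and muh :: "('s \<times> 'a) pmf"
    and mu :: "('s \<times> 'a \<times> 's) pmf"
    and D :: "('s \<times> 'a \<times> 's) list"
    and G :: "('s \<Rightarrow> real) set"
    and TT :: "('s \<Rightarrow> 'a \<Rightarrow> 's pmf) set"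
    and Pi :: "('s \<Rightarrow> 'a pmf) set"
    and pol :: "'s \<Rightarrow> 'a pmf"
  assumes gamma: "0 \<le> \<gamma>" "\<gamma> < 1"
    and r_nonneg: "\<And>x. 0 \<le> r x"
    and r_bdd: "bdd_above (range r)"
    and zeta: "\<zeta> > 0"
    and delta: "0 < \<delta>" "\<delta> < 1"
    and n_pos: "length D > 0"
    and mu_cond: "\<And>s a s'. pmf mu (s, a, s') = pmf (sa_marg mu) (s, a) * pmf (Tstar s a) s'"
    and G_fin: "finite G" "G \<noteq> {}"
    and TT_fin: "finite TT" "TT \<noteq> {}"
    and Pi_fin: "finite Pi" "Pi \<noteq> {}"
    and G_range: "\<And>g s. g \<in> G \<Longrightarrow> 0 \<le> g s \<and> g s \<le> Vmax \<gamma> r"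
    and iota: "\<iota> = ln (2 * real (card G) * real (card TT) * real (card Pi) / \<delta>)"
    and event_E: "\<forall>p\<in>Pi. \<forall>g\<in>G. \<forall>T\<in>TT.
        \<bar>Lpop \<gamma> s0 \<zeta> muh mu Tstar p g T - lsamp \<gamma> s0 \<zeta> muh D p g T\<bar>
          \<le> 2 * Vmax \<gamma> r * sqrt (\<zeta> * \<iota> / real (length D))"
    and pol_in: "pol \<in> Pi"
  shows "(MAX T\<in>TT. lb \<gamma> r s0 \<zeta> muh D G T pol)
     \<ge> eta \<gamma> r s0 Tstar pol
       - 6 * Vmax \<gamma> r * eps_rho \<gamma> s0 TT Tstar pol / (1 - \<gamma>)^2
       - 1 / (1 - \<gamma>) * (Vmax \<gamma> r * eps_mu \<gamma> s0 \<zeta> muh Tstar pol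
            + 2 * Vmax \<gamma> r * sqrt (\<zeta> * \<iota> / real (length D))
            + \<zeta> * Vmax \<gamma> r * TV muh (sa_marg mu))"
proof -
  \<comment> \<open>The hypotheses on \<open>\<delta>\<close>, \<open>\<iota>\<close>, \<open>length D\<close>, \<open>mu\<close> and \<open>Pi\<close> only serve to make the
    event \<open>event_E\<close> likely.\<close>
  define err where "err = (\<lambda>T. Eocc \<gamma> s0 Tstar pol (\<lambda>(s, a). TV (T s a) (Tstar s a)))"
  have "eps_rho \<gamma> s0 TT Tstar pol = Min (err ` TT)"
    using TT_fin by (simp add: eps_rho_def err_def cInf_eq_Min)
  moreover have "Min (err ` TT) \<in> err ` TT"
    using TT_fin by (intro Min_in) auto
  ultimately obtain T0 where T0: "T0 \<in> TT" "err T0 = eps_rho \<gamma> s0 TT Tstar pol"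
    by auto
  have "eta \<gamma> r s0 Tstar pol
       - 6 * Vmax \<gamma> r * eps_rho \<gamma> s0 TT Tstar pol / (1 - \<gamma>)^2
       - 1 / (1 - \<gamma>) * (Vmax \<gamma> r * eps_mu \<gamma> s0 \<zeta> muh Tstar pol
            + 2 * Vmax \<gamma> r * sqrt (\<zeta> * \<iota> / real (length D))
            + \<zeta> * Vmax \<gamma> r * TV muh (sa_marg mu))
     \<le> lb \<gamma> r s0 \<zeta> muh D G T0 pol"
    unfolding T0(2)[symmetric] err_def
    by (rule lb_ge_eta_minus_errors[OF gamma r_nonneg r_bdd zeta G_fin])
      (use G_range event_E pol_in T0(1) in auto)
  also have "\<dots> \<le> (MAX T\<in>TT. lb \<gamma> r s0 \<zeta> muh D G T pol)"
    using TT_fin T0(1) by (intro Max_ge) auto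
  finally show ?thesis .
qed

end
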